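(* Let $d\ge1$, $\boldsymbol\nu\in\mathbb C^d$, $\boldsymbol m=(m_1,\dots,m_{d+1})\in\mathbb Z^{d+1}$. If there is $a\in[-\frac12,|m_{d+1}|]$ such that $\frac12(-\frac12-a)<\operatorname{Re}\nu_l<\frac12(|m_l|-a)$ for all $l=1,\dots,d$, then for every $x>0$ the integral $$j_{\boldsymbol\nu,\boldsymbol m}(x)=2^d\int_{\mathbb R_+^d}j_{(0,m_{d+1})}(xy_1\cdots y_d)\prod_{l=1}^dy_l^{2\nu_l-1}j_{(0,m_l)}(xy_l^{-1})\,dy_d\cdots dy_1$$ converges absolutely.
   Context: For $m\in\mathbb Z$ and $x>0$, $j_{(0,m)}(x)=2\pi i^mJ_m(4\pi x)$, where $J_m$ is the classical $J$-Bessel function. *)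

theory Defs
  imports "HOL-Analysis.Analysis"
begin

definition besselJ_nat :: "nat \<Rightarrow> real \<Rightarrow> real" where
  "besselJ_nat n x = (\<Sum>k. (-1)^k / (fact k * fact (k + n)) * (x / 2) ^ (2 * k + n))"

definition besselJ :: "int \<Rightarrow> real \<Rightarrow> real" where
  "besselJ m x = (if 0 \<le> m then besselJ_nat (nat m) x
                  else (-1) ^ nat (- m) * besselJ_nat (nat (- m)) x)"

definition j0 :: "int \<Rightarrow> real \<Rightarrow> complex" where
  "j0 m x = 2 * complex_of_real pi * (\<i> powi m) * complex_of_real (besselJ m (4 * pi * x))"

end

theory Submission
  imports Defs "HOL-Complex_Analysis.Cauchy_Integral_Theorem"
begin

text \<open>
  Near 0 the power series gives J_n(t) = O(t^n). At infinity J_n(t) = O(t^(-1/2)): the function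
  g(t) = sqrt t * J_n(t) solves g'' + q g = 0 with q(t) = 1 - (n^2 - 1/4) / t^2, and the
  Sonin--Polya energy g^2 + g'^2 / q (if q increases) or q g^2 + g'^2 (if q decreases) is
  nonincreasing. Hence |j_(0,m)(t)| <= C t^b for every b in [-1/2, |m|]. Bounding the first
  factor with b = a and distributing (x y_1 ... y_d)^a over the variables, the integrand is
  dominated by a product of one-variable functions; the l-th one is a multiple of
  y^(a + 2 Re nu_l - 1/2) near 0 (take b = -1/2) and of y^(a + 2 Re nu_l - 1 - |m_l|) near
  infinity (take b = |m_l|), and the hypotheses on Re nu_l say precisely that both are integrable.
\<close>

definition besselJ_fps :: "nat \<Rightarrow> real fps" where
  "besselJ_fps n = Abs_fps (\<lambda>j.
     if n \<le> j \<and> even (j - n)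
     then (-1) ^ ((j - n) div 2) / (fact ((j - n) div 2) * fact ((j - n) div 2 + n) * 2 ^ j)
     else 0)"

lemma besselJ_fps_nth:
  "fps_nth (besselJ_fps n) (2 * k + n) = (-1) ^ k / (fact k * fact (k + n) * 2 ^ (2 * k + n))"
  by (simp add: besselJ_fps_def)

lemma besselJ_fps_nth_eq_0:
  assumes "\<nexists>k. j = 2 * k + n"
  shows "fps_nth (besselJ_fps n) j = 0"
proof -
  have "\<not> (n \<le> j \<and> even (j - n))"
    using assms by (metis dvd_def le_add_diff_inverse2 mult.commute)
  then show ?thesis by (simp add: besselJ_fps_def)
qed

lemma besselJ_fps_recurrence:
  "((real j + 2) ^ 2 - real n ^ 2) * fps_nth (besselJ_fps n) (j + 2)
     + fps_nth (besselJ_fps n) j = 0"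
proof (cases "\<exists>k. j = 2 * k + n")
  case True
  then obtain k where j: "j = 2 * k + n" by blast
  define F :: real where "F = fact k * fact (k + n) * 2 ^ (2 * k + n)"
  define Q :: real where "Q = 4 * (real k + 1) * (real k + 1 + real n)"
  have "fps_nth (besselJ_fps n) (j + 2) =
      (-1) ^ Suc k / (fact (Suc k) * fact (Suc k + n) * 2 ^ (2 * Suc k + n))"
    using besselJ_fps_nth[of n "Suc k"] j by simp
  also have "fact (Suc k) * fact (Suc k + n) * 2 ^ (2 * Suc k + n) = F * Q"
    by (simp add: F_def Q_def power_add algebra_simps)
  finally have "fps_nth (besselJ_fps n) (j + 2) = - (fps_nth (besselJ_fps n) j / Q)"
    unfolding j besselJ_fps_nth F_def by simp
  moreover have "(real j + 2) ^ 2 - real n ^ 2 = Q"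
    unfolding j Q_def by (simp add: power2_eq_square algebra_simps)
  moreover have "Q \<noteq> 0"
    unfolding Q_def by simp
  ultimately show ?thesis by simp
next
  case False
  show ?thesis
  proof (cases "\<exists>k. j + 2 = 2 * k + n")
    case True
    then obtain k where k: "j + 2 = 2 * k + n" by blast
    with False have "k = 0" by (cases k) auto
    with k show ?thesis by (simp add: besselJ_fps_nth_eq_0[OF False])
  next
    case False': False
    then show ?thesis using False by (simp add: besselJ_fps_nth_eq_0)
  qed
qed

lemma besselJ_fps_equation:
  fixes n :: nat
  defines "J \<equiv> besselJ_fps n"
  shows "fps_X ^ 2 * fps_deriv (fps_deriv J) + fps_X * fps_deriv J
           + (fps_X ^ 2 - fps_const (real n ^ 2)) * J = 0"
proof (rule fps_ext)
  fix j
  have low: "n \<noteq> 0 \<Longrightarrow> fps_nth J 0 = 0" "n \<noteq> 1 \<Longrightarrow> fps_nth J 1 = 0"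
    unfolding J_def by (rule besselJ_fps_nth_eq_0, presburger)+
  have rec: "((real i + 2) ^ 2 - real n ^ 2) * fps_nth J (i + 2) + fps_nth J i = 0" for i
    unfolding J_def by (rule besselJ_fps_recurrence)
  consider "j = 0" | "j = 1" | i :: nat where "j = i + 2"
    by (metis One_nat_def add_2_eq_Suc' not0_implies_Suc)
  then show "fps_nth (fps_X ^ 2 * fps_deriv (fps_deriv J) + fps_X * fps_deriv J
      + (fps_X ^ 2 - fps_const (real n ^ 2)) * J) j = fps_nth 0 j"
  proof cases
    case 1
    with low(1) show ?thesis
      by (auto simp: ring_distribs fps_X_power_mult_nth fps_X_mult_nth fps_mult_left_const_nth)
  next
    case 2
    with low(2) show ?thesis
      by (auto simp: ring_distribs fps_X_power_mult_nth fps_X_mult_nth fps_mult_left_const_nth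
          power2_eq_1_iff)
  next
    case 3
    with rec[of i] show ?thesis
      by (simp add: ring_distribs fps_X_power_mult_nth fps_X_mult_nth fps_mult_left_const_nth)
        (simp add: power2_eq_square field_simps)
  qed
qed

lemma besselJ_nat_term_bound:
  fixes x :: real
  shows "norm ((-1) ^ k / (fact k * fact (k + n)) * (x / 2) ^ (2 * k + n))
     \<le> \<bar>x / 2\<bar> ^ n * (((x / 2)\<^sup>2) ^ k / fact k)"
proof -
  have "\<bar>(x / 2) ^ (2 * k + n)\<bar> = \<bar>x / 2\<bar> ^ (2 * k) * \<bar>x / 2\<bar> ^ n"
    by (simp only: power_abs power_add abs_mult)
  also have "\<bar>x / 2\<bar> ^ (2 * k) = ((x / 2)\<^sup>2) ^ k"
    by (simp only: power_mult power2_abs)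
  finally have "\<bar>(x / 2) ^ (2 * k + n)\<bar> = \<bar>x / 2\<bar> ^ n * ((x / 2)\<^sup>2) ^ k"
    by simp
  then have "norm ((-1) ^ k / (fact k * fact (k + n)) * (x / 2) ^ (2 * k + n))
      = \<bar>x / 2\<bar> ^ n * (((x / 2)\<^sup>2) ^ k / fact k) / fact (k + n)"
    by (simp add: abs_mult)
  also have "\<dots> \<le> \<bar>x / 2\<bar> ^ n * (((x / 2)\<^sup>2) ^ k / fact k)"
    using divide_left_mono[of 1 "fact (k + n)" "\<bar>x / 2\<bar> ^ n * (((x / 2)\<^sup>2) ^ k / fact k)"]
    by simp
  finally show ?thesis .
qed

lemma besselJ_nat_majorant_sums:
  fixes x :: real
  shows "(\<lambda>k. \<bar>x / 2\<bar> ^ n * (((x / 2)\<^sup>2) ^ k / fact k))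
           sums (\<bar>x / 2\<bar> ^ n * exp ((x / 2)\<^sup>2))"
proof -
  have "(\<lambda>k. ((x / 2)\<^sup>2) ^ k / fact k) sums exp ((x / 2)\<^sup>2)"
    using exp_converges[of "(x / 2)\<^sup>2"] by (simp add: field_simps)
  then show ?thesis by (rule sums_mult)
qed

lemma summable_besselJ_nat_terms:
  fixes x :: real
  shows "summable (\<lambda>k. (-1) ^ k / (fact k * fact (k + n)) * (x / 2) ^ (2 * k + n))"
  by (rule summable_comparison_test[OF _ sums_summable[OF besselJ_nat_majorant_sums]])
    (use besselJ_nat_term_bound in blast)

lemma abs_besselJ_nat_le: "\<bar>besselJ_nat n x\<bar> \<le> \<bar>x / 2\<bar> ^ n * exp ((x / 2)\<^sup>2)"
proof -
  have "norm (besselJ_nat n x) \<le> (\<Sum>k. \<bar>x / 2\<bar> ^ n * (((x / 2)\<^sup>2) ^ k / fact k))"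
    unfolding besselJ_nat_def
    by (rule norm_suminf_le[OF besselJ_nat_term_bound
          sums_summable[OF besselJ_nat_majorant_sums]])
  also have "\<dots> = \<bar>x / 2\<bar> ^ n * exp ((x / 2)\<^sup>2)"
    by (rule sums_unique[OF besselJ_nat_majorant_sums, symmetric])
  finally show ?thesis by simp
qed

lemma sums_besselJ_fps: "(\<lambda>j. fps_nth (besselJ_fps n) j * x ^ j) sums besselJ_nat n x"
proof -
  have "fps_nth (besselJ_fps n) (2 * k + n) * x ^ (2 * k + n)
      = (-1) ^ k / (fact k * fact (k + n)) * (x / 2) ^ (2 * k + n)" for k
    by (simp add: besselJ_fps_nth power_divide)
  then have "(\<lambda>k. fps_nth (besselJ_fps n) (2 * k + n) * x ^ (2 * k + n))
      sums besselJ_nat n x"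
    using summable_sums[OF summable_besselJ_nat_terms] by (simp add: besselJ_nat_def)
  moreover have "strict_mono (\<lambda>k. 2 * k + n)"
    by (auto simp: strict_mono_def)
  ultimately show ?thesis
    using besselJ_fps_nth_eq_0 by (subst (asm) sums_mono_reindex) auto
qed

lemma fps_conv_radius_besselJ_fps [simp]: "fps_conv_radius (besselJ_fps n) = \<infinity>"
  unfolding fps_conv_radius_def
  by (rule conv_radius_inftyI'') (use sums_besselJ_fps sums_summable in blast)

lemma eval_fps_besselJ_fps [simp]: "eval_fps (besselJ_fps n) = besselJ_nat n"
  by (rule ext) (simp add: eval_fps_def sums_unique[OF sums_besselJ_fps])

lemma fps_conv_radius_infinite:
  fixes f g :: "'a :: {banach, real_normed_div_algebra, comm_ring_1} fps"
  assumes "fps_conv_radius f = \<infinity>" "fps_conv_radius g = \<infinity>"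
  shows "fps_conv_radius (f + g) = \<infinity>" "fps_conv_radius (f - g) = \<infinity>"
    "fps_conv_radius (f * g) = \<infinity>"
  using fps_conv_radius_add[of f g] fps_conv_radius_diff[of f g] fps_conv_radius_mult[of f g]
    assms by simp_all

lemma besselJ_nat_equation:
  obtains J' J'' :: "real \<Rightarrow> real"
  where "\<And>t. (besselJ_nat n has_real_derivative J' t) (at t)"
    and "\<And>t. (J' has_real_derivative J'' t) (at t)"
    and "\<And>t. t\<^sup>2 * J'' t + t * J' t + (t\<^sup>2 - (real n)\<^sup>2) * besselJ_nat n t = 0"
proof
  define J where "J = besselJ_fps n"
  have radius_J [simp]: "fps_conv_radius J = \<infinity>"
    by (simp add: J_def)
  have radius_J' [simp]: "fps_conv_radius (fps_deriv J) = \<infinity>"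
    using fps_conv_radius_deriv[of J] by simp
  have radius_J'' [simp]: "fps_conv_radius (fps_deriv (fps_deriv J)) = \<infinity>"
    using fps_conv_radius_deriv[of "fps_deriv J"] by simp
  show "(besselJ_nat n has_real_derivative eval_fps (fps_deriv J) t) (at t)" for t
    using has_field_derivative_eval_fps[of t J] by (simp add: J_def)
  show "(eval_fps (fps_deriv J) has_real_derivative eval_fps (fps_deriv (fps_deriv J)) t) (at t)"
    for t
    using has_field_derivative_eval_fps[of t "fps_deriv J"] by simp
  show "t\<^sup>2 * eval_fps (fps_deriv (fps_deriv J)) t + t * eval_fps (fps_deriv J) t
      + (t\<^sup>2 - (real n)\<^sup>2) * besselJ_nat n t = 0" for t
  proof -
    have "eval_fps (fps_X\<^sup>2 * fps_deriv (fps_deriv J) + fps_X * fps_deriv J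
        + (fps_X\<^sup>2 - fps_const ((real n)\<^sup>2)) * J) t = 0"
      using besselJ_fps_equation[of n] by (simp add: J_def)
    then show ?thesis
      by (simp add: eval_fps_add eval_fps_mult eval_fps_diff fps_conv_radius_infinite)
        (simp add: J_def)
  qed
qed

lemma bessel_liouville_transform:
  fixes f f' f'' :: "real \<Rightarrow> real" and \<mu> t :: real
  assumes t: "t > 0"
    and f': "\<And>t. t > 0 \<Longrightarrow> (f has_real_derivative f' t) (at t)"
    and f'': "\<And>t. t > 0 \<Longrightarrow> (f' has_real_derivative f'' t) (at t)"
    and eq: "\<And>t. t > 0 \<Longrightarrow> t\<^sup>2 * f'' t + t * f' t + (t\<^sup>2 - \<mu>) * f t = 0"
  defines "g \<equiv> \<lambda>t. sqrt t * f t" and "g' \<equiv> \<lambda>t. f t / (2 * sqrt t) + sqrt t * f' t"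
  shows "(g has_real_derivative g' t) (at t)"
    and "(g' has_real_derivative - (1 - (\<mu> - 1/4) / t\<^sup>2) * g t) (at t)"
proof -
  have "t \<noteq> 0" using t by simp
  note t_facts = t this
  show "(g has_real_derivative g' t) (at t)"
    unfolding g_def g'_def
    by (rule DERIV_real_sqrt[OF t] derivative_eq_intros f' t refl | simp add: t_facts)+
      (simp add: t field_simps)
  obtain r where r: "r > 0" "t = r\<^sup>2"
    using t by (metis real_sqrt_gt_0_iff real_sqrt_pow2 less_imp_le)
  have f''_eq: "f'' t = - (t * f' t + (t\<^sup>2 - \<mu>) * f t) / t\<^sup>2"
    using eq[OF t] t by (simp add: field_simps)
  show "(g' has_real_derivative - (1 - (\<mu> - 1/4) / t\<^sup>2) * g t) (at t)"
    unfolding g_def g'_def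
    by (rule DERIV_real_sqrt[OF t] derivative_eq_intros f' f'' t refl | simp add: t_facts)+
      (unfold f''_eq, use r in \<open>simp add: field_simps power2_eq_square\<close>)
qed

lemma sonin_energy_has_derivative:
  fixes g g' q :: "real \<Rightarrow> real"
  assumes "(g has_real_derivative g' t) (at t)" "(g' has_real_derivative - q t * g t) (at t)"
    and "(q has_real_derivative q') (at t)" "q t \<noteq> 0"
  shows "((\<lambda>t. (g t)\<^sup>2 + (g' t)\<^sup>2 / q t)
           has_real_derivative - q' * (g' t)\<^sup>2 / (q t)\<^sup>2) (at t)"
  by (rule derivative_eq_intros assms refl)+
    (use assms(4) in \<open>simp add: field_simps power2_eq_square\<close>)

lemma sonin_energy'_has_derivative:
  fixes g g' q :: "real \<Rightarrow> real"
  assumes "(g has_real_derivative g' t) (at t)" "(g' has_real_derivative - q t * g t) (at t)"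
    and "(q has_real_derivative q') (at t)"
  shows "((\<lambda>t. q t * (g t)\<^sup>2 + (g' t)\<^sup>2)
           has_real_derivative q' * (g t)\<^sup>2) (at t)"
  by (rule derivative_eq_intros assms refl)+ (simp add: algebra_simps power2_eq_square)

lemma liouville_normal_form_bounded:
  fixes g g' :: "real \<Rightarrow> real" and k T :: real
  assumes T: "T > 0" "k < T\<^sup>2"
    and g': "\<And>t. T \<le> t \<Longrightarrow> (g has_real_derivative g' t) (at t)"
    and g'': "\<And>t. T \<le> t \<Longrightarrow> (g' has_real_derivative - (1 - k / t\<^sup>2) * g t) (at t)"
  shows "\<exists>C. \<forall>t \<ge> T. (g t)\<^sup>2 \<le> C"
proof -
  define q where "q t = 1 - k / t\<^sup>2" for t
  have t_pos: "t > 0" if "T \<le> t" for t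
    using T that by linarith
  have q_pos: "q t > 0" if "T \<le> t" for t
  proof -
    have "k < t\<^sup>2"
      using T that power_mono[of T t 2] by linarith
    then show ?thesis
      using t_pos[OF that] by (simp add: q_def field_simps)
  qed
  have dq: "(q has_real_derivative 2 * k / t ^ 3) (at t)" if "T \<le> t" for t
  proof -
    have t2: "t\<^sup>2 \<noteq> 0" using t_pos[OF that] by simp
    show ?thesis
      unfolding q_def by (rule derivative_eq_intros refl t2)+
        (use t2 in \<open>simp add: field_simps power3_eq_cube power4_eq_xxxx\<close>)
  qed
  have dg': "(g' has_real_derivative - q t * g t) (at t)" if "T \<le> t" for t
    using g''[OF that] by (simp add: q_def)
  have decreasing: "E t \<le> E T"
    if "\<And>t. T \<le> t \<Longrightarrow> \<exists>D. (E has_real_derivative D) (at t) \<and> D \<le> 0" "T \<le> t"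
    for E t
    using DERIV_nonpos_imp_nonincreasing[of T t E] that by auto
  show ?thesis
  proof (cases "k \<ge> 0")
    case True
    define E where "E t = (g t)\<^sup>2 + (g' t)\<^sup>2 / q t" for t
    have "(g t)\<^sup>2 \<le> E T" if "T \<le> t" for t
    proof -
      have "(g t)\<^sup>2 \<le> E t"
        using q_pos[OF that] by (simp add: E_def)
      also have "E t \<le> E T"
      proof (rule decreasing[OF _ that])
        fix s assume "T \<le> s"
        show "\<exists>D. (E has_real_derivative D) (at s) \<and> D \<le> 0"
        proof (intro exI conjI)
          show "(E has_real_derivative - (2 * k / s ^ 3) * (g' s)\<^sup>2 / (q s)\<^sup>2) (at s)"
            unfolding E_def[abs_def] using \<open>T \<le> s\<close> q_pos[OF \<open>T \<le> s\<close>]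
            by (intro sonin_energy_has_derivative g' dg' dq) auto
          show "- (2 * k / s ^ 3) * (g' s)\<^sup>2 / (q s)\<^sup>2 \<le> 0"
            using True t_pos[OF \<open>T \<le> s\<close>] by simp
        qed
      qed
      finally show ?thesis .
    qed
    then show ?thesis by blast
  next
    case False
    define E where "E t = q t * (g t)\<^sup>2 + (g' t)\<^sup>2" for t
    have "(g t)\<^sup>2 \<le> E T" if "T \<le> t" for t
    proof -
      have "1 \<le> q t"
        using False t_pos[OF that] by (simp add: q_def divide_nonpos_pos)
      then have "(g t)\<^sup>2 \<le> q t * (g t)\<^sup>2"
        using mult_right_mono[of 1 "q t" "(g t)\<^sup>2"] by simp
      then have "(g t)\<^sup>2 \<le> E t"
        unfolding E_def using zero_le_power2[of "g' t"] by linarith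
      also have "E t \<le> E T"
      proof (rule decreasing[OF _ that])
        fix s assume "T \<le> s"
        show "\<exists>D. (E has_real_derivative D) (at s) \<and> D \<le> 0"
        proof (intro exI conjI)
          show "(E has_real_derivative 2 * k / s ^ 3 * (g s)\<^sup>2) (at s)"
            unfolding E_def[abs_def] using \<open>T \<le> s\<close>
            by (intro sonin_energy'_has_derivative g' dg' dq)
          show "2 * k / s ^ 3 * (g s)\<^sup>2 \<le> 0"
            using False t_pos[OF \<open>T \<le> s\<close>]
            by (simp add: mult_nonpos_nonneg divide_nonpos_pos)
        qed
      qed
      finally show ?thesis .
    qed
    then show ?thesis by blast
  qed
qed

lemma bessel_equation_solution_decay:
  fixes f f' f'' :: "real \<Rightarrow> real" and \<mu> T :: real
  assumes T: "T > 0" "\<mu> - 1/4 < T\<^sup>2"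
    and f': "\<And>t. t > 0 \<Longrightarrow> (f has_real_derivative f' t) (at t)"
    and f'': "\<And>t. t > 0 \<Longrightarrow> (f' has_real_derivative f'' t) (at t)"
    and eq: "\<And>t. t > 0 \<Longrightarrow> t\<^sup>2 * f'' t + t * f' t + (t\<^sup>2 - \<mu>) * f t = 0"
  shows "\<exists>C. \<forall>t \<ge> T. t * (f t)\<^sup>2 \<le> C"
proof -
  define g where "g t = sqrt t * f t" for t
  define g' where "g' t = f t / (2 * sqrt t) + sqrt t * f' t" for t
  have "\<exists>C. \<forall>t \<ge> T. (g t)\<^sup>2 \<le> C"
  proof (rule liouville_normal_form_bounded[OF T])
    fix t assume "T \<le> t"
    then have "t > 0" using T by linarith
    note transform = bessel_liouville_transform[OF \<open>t > 0\<close> f' f'' eq]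
    show "(g has_real_derivative g' t) (at t)"
      unfolding g_def[abs_def] g'_def[abs_def] by (rule transform(1))
    show "(g' has_real_derivative - (1 - (\<mu> - 1/4) / t\<^sup>2) * g t) (at t)"
      unfolding g_def[abs_def] g'_def[abs_def] by (rule transform(2))
  qed
  moreover have "(g t)\<^sup>2 = t * (f t)\<^sup>2" if "T \<le> t" for t
    using T that by (simp add: g_def power_mult_distrib)
  ultimately show ?thesis by auto
qed

lemma besselJ_nat_sqrt_decay: "\<exists>C. \<forall>t \<ge> real n + 1. t * (besselJ_nat n t)\<^sup>2 \<le> C"
proof -
  obtain J' J'' where "\<And>t. (besselJ_nat n has_real_derivative J' t) (at t)"
      "\<And>t. (J' has_real_derivative J'' t) (at t)"
      "\<And>t. t\<^sup>2 * J'' t + t * J' t + (t\<^sup>2 - (real n)\<^sup>2) * besselJ_nat n t = 0"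
    using besselJ_nat_equation[of n] by blast
  moreover have "(real n)\<^sup>2 - 1/4 < (real n + 1)\<^sup>2"
    by (simp add: power2_eq_square algebra_simps)
  ultimately show ?thesis
    by (intro bessel_equation_solution_decay) auto
qed

lemma powr_bound_interpolate:
  fixes g :: "real \<Rightarrow> real" and A B T p q :: real
  assumes "1 \<le> T" "q \<le> p" "0 \<le> A" "0 \<le> B"
    and small: "\<And>t. 0 < t \<Longrightarrow> t \<le> T \<Longrightarrow> g t \<le> A * t powr p"
    and large: "\<And>t. T \<le> t \<Longrightarrow> g t \<le> B * t powr q"
  obtains C where "0 \<le> C"
    "\<And>t b. 0 < t \<Longrightarrow> q \<le> b \<Longrightarrow> b \<le> p \<Longrightarrow> g t \<le> C * t powr b"
proof
  define C where "C = A * T powr (p - q) + B"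
  show "0 \<le> C" using assms by (simp add: C_def)
  fix t b :: real assume t: "0 < t" and b: "q \<le> b" "b \<le> p"
  show "g t \<le> C * t powr b"
  proof (cases "t \<le> T")
    case True
    have "t powr (p - b) \<le> T powr (p - b)"
      using t True b by (intro powr_mono2) auto
    also have "\<dots> \<le> T powr (p - q)"
      using assms(1) b by (intro powr_mono) auto
    finally have "t powr p \<le> T powr (p - q) * t powr b"
      using t by (simp add: powr_diff field_simps)
    then have "A * t powr p \<le> A * T powr (p - q) * t powr b"
      using assms(3) by (simp add: mult_left_mono mult.assoc)
    also have "\<dots> \<le> C * t powr b"
      using assms(4) by (simp add: C_def distrib_right)
    finally show ?thesis using small[OF t True] by linarith
  next
    case False
    have "t powr q \<le> t powr b"
      using assms(1) False b by (intro powr_mono) auto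
    then have "B * t powr q \<le> C * t powr b"
      using assms by (intro mult_mono) (auto simp: C_def)
    then show ?thesis using large[of t] False by linarith
  qed
qed

lemma besselJ_nat_powr_bound:
  obtains C where "0 \<le> C"
    "\<And>t b. 0 < t \<Longrightarrow> -1/2 \<le> b \<Longrightarrow> b \<le> real n
      \<Longrightarrow> \<bar>besselJ_nat n t\<bar> \<le> C * t powr b"
proof -
  define T where "T = real n + 1"
  obtain C1 where C1: "\<And>t. T \<le> t \<Longrightarrow> t * (besselJ_nat n t)\<^sup>2 \<le> C1"
    using besselJ_nat_sqrt_decay[of n] unfolding T_def by blast
  have "0 \<le> T * (besselJ_nat n T)\<^sup>2"
    by (simp add: T_def)
  then have "0 \<le> C1"
    using C1[of T] by simp
  have small: "\<bar>besselJ_nat n t\<bar> \<le> exp ((T / 2)\<^sup>2) * t powr real n"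
    if "0 < t" "t \<le> T" for t
  proof -
    have "\<bar>besselJ_nat n t\<bar> \<le> \<bar>t / 2\<bar> ^ n * exp ((t / 2)\<^sup>2)"
      by (rule abs_besselJ_nat_le)
    also have "\<dots> \<le> t ^ n * exp ((T / 2)\<^sup>2)"
      using that by (intro mult_mono power_mono) auto
    finally show ?thesis
      using that by (simp add: powr_realpow mult.commute)
  qed
  have large: "\<bar>besselJ_nat n t\<bar> \<le> sqrt C1 * t powr (-1/2)" if "T \<le> t" for t
  proof -
    have t: "t > 0" using that by (simp add: T_def)
    have "(besselJ_nat n t)\<^sup>2 \<le> C1 / t"
      using C1[OF that] t by (simp add: field_simps)
    then have "\<bar>besselJ_nat n t\<bar> \<le> sqrt (C1 / t)"
      using real_sqrt_le_mono by fastforce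
    also have "\<dots> = sqrt C1 * t powr (-1/2)"
      using t by (simp add: real_sqrt_divide powr_minus_divide powr_half_sqrt)
    finally show ?thesis .
  qed
  show ?thesis
    by (rule powr_bound_interpolate[OF _ _ _ _ small large])
      (use that \<open>0 \<le> C1\<close> in \<open>auto simp: T_def\<close>)
qed

lemma abs_besselJ: "\<bar>besselJ m t\<bar> = \<bar>besselJ_nat (nat \<bar>m\<bar>) t\<bar>"
  by (simp add: besselJ_def abs_mult)

lemma norm_j0_powr_bound:
  "\<exists>C\<ge>0. \<forall>t b. 0 < t \<longrightarrow> -1/2 \<le> b \<longrightarrow> b \<le> of_int \<bar>m\<bar> \<longrightarrow> norm (j0 m t) \<le> C * t powr b"
proof -
  obtain C where C: "0 \<le> C"
    "\<And>t b. 0 < t \<Longrightarrow> -1/2 \<le> b \<Longrightarrow> b \<le> of_int \<bar>m\<bar>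
      \<Longrightarrow> \<bar>besselJ m t\<bar> \<le> C * t powr b"
    using besselJ_nat_powr_bound[of "nat \<bar>m\<bar>"] unfolding abs_besselJ by auto
  have "norm (j0 m t) \<le> 2 * pi * C * (4 * pi) powr of_int \<bar>m\<bar> * t powr b"
    if t: "0 < t" and b: "-1/2 \<le> b" "b \<le> of_int \<bar>m\<bar>" for t b :: real
  proof -
    have "norm (j0 m t) = 2 * pi * \<bar>besselJ m (4 * pi * t)\<bar>"
      by (simp add: j0_def norm_mult norm_power_int)
    also have "\<dots> \<le> 2 * pi * (C * (4 * pi) powr b * t powr b)"
      using C(2)[of "4 * pi * t" b] t b by (simp add: powr_mult)
    also have "\<dots> \<le> 2 * pi * (C * (4 * pi) powr of_int \<bar>m\<bar> * t powr b)"
      using C(1) b pi_gt3 by (intro mult_left_mono mult_right_mono powr_mono) auto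
    finally show ?thesis
      by (simp add: mult.assoc)
  qed
  moreover have "0 \<le> 2 * pi * C * (4 * pi) powr of_int \<bar>m\<bar>"
    using C(1) by simp
  ultimately show ?thesis by blast
qed
lemma continuous_on_besselJ_nat: "continuous_on UNIV (besselJ_nat n)"
  using continuous_on_eval_fps[of "besselJ_fps n"] by simp

lemma continuous_on_besselJ: "continuous_on UNIV (besselJ m)"
  unfolding besselJ_def[abs_def] using continuous_on_besselJ_nat
  by (cases "0 \<le> m") (auto intro!: continuous_intros)

lemma continuous_on_j0: "continuous_on UNIV (j0 m)"
  unfolding j0_def[abs_def]
  by (intro continuous_intros continuous_on_of_real
      continuous_on_compose2[OF continuous_on_besselJ]) auto

lemma borel_measurable_j0 [measurable]: "j0 m \<in> borel_measurable borel"
  by (rule borel_measurable_continuous_onI[OF continuous_on_j0])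

lemma borel_measurable_of_real_powr [measurable]:
  "(\<lambda>t::real. complex_of_real t powr w) \<in> borel_measurable borel"
  unfolding powr_def by measurable

lemma integrable_indicator_powr_at_0:
  fixes x e :: real
  assumes "-1 < e" "0 < x"
  shows "integrable lborel (\<lambda>t. indicator {0<..x} t * t powr e)"
proof -
  have "(\<lambda>t::real. t powr e) absolutely_integrable_on {0<..x}"
    by (rule nonnegative_absolutely_integrable_1[OF integrable_on_powr_from_0'])
      (use assms in auto)
  then show ?thesis
    unfolding set_integrable_def by (subst (asm) integrable_completion) (auto simp: mult_ac)
qed

lemma integrable_indicator_powr_at_top:
  fixes x e :: real
  assumes "e < -1" "0 < x"
  shows "integrable lborel (\<lambda>t. indicator {x<..} t * t powr e)"
proof -
  have "(\<lambda>t::real. t powr e) integrable_on {x..}"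
    using has_integral_powr_to_inf[OF assms] unfolding integrable_on_def by blast
  then have "(\<lambda>t::real. t powr e) absolutely_integrable_on {x..}"
    by (rule nonnegative_absolutely_integrable_1) auto
  then have "set_integrable lebesgue {x<..} (\<lambda>t::real. t powr e)"
    by (rule set_integrable_subset) auto
  then show ?thesis
    unfolding set_integrable_def by (subst (asm) integrable_completion) (auto simp: mult_ac)
qed

definition two_powers :: "real \<Rightarrow> real \<Rightarrow> real \<Rightarrow> real \<Rightarrow> real" where
  "two_powers x \<alpha> \<beta> t = indicator {0<..x} t * t powr \<alpha> + indicator {x<..} t * t powr \<beta>"

lemma integrable_two_powers:
  assumes "0 < x" "-1 < \<alpha>" "\<beta> < -1"
  shows "integrable lborel (two_powers x \<alpha> \<beta>)"
  unfolding two_powers_def[abs_def] using assms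
  by (intro Bochner_Integration.integrable_add integrable_indicator_powr_at_0
      integrable_indicator_powr_at_top)

lemma norm_powr_mult_at_inverse_le:
  fixes h :: "real \<Rightarrow> complex" and w :: complex
  assumes x: "0 < x" and t: "0 < t" and "0 \<le> C" "p \<le> q"
    and h: "\<And>s b. 0 < s \<Longrightarrow> p \<le> b \<Longrightarrow> b \<le> q \<Longrightarrow> norm (h s) \<le> C * s powr b"
  shows "t powr a * norm (of_real t powr w * h (x / t))
           \<le> C * (x powr p + x powr q) * two_powers x (a + Re w - p) (a + Re w - q) t"
proof -
  define b where "b = (if t \<le> x then p else q)"
  have "t powr a * norm (of_real t powr w * h (x / t))
      = t powr (a + Re w) * norm (h (x / t))"
    using t by (simp add: norm_mult norm_powr_real_powr powr_add)
  also have "\<dots> \<le> t powr (a + Re w) * (C * (x / t) powr b)"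
    using h[of "x / t" b] x t \<open>p \<le> q\<close> by (intro mult_left_mono) (auto simp: b_def)
  also have "\<dots> = C * x powr b * t powr (a + Re w - b)"
    using x t by (simp add: powr_divide powr_diff field_simps)
  also have "\<dots> \<le> C * (x powr p + x powr q) * t powr (a + Re w - b)"
    using \<open>0 \<le> C\<close> by (intro mult_right_mono mult_left_mono) (auto simp: b_def)
  also have "t powr (a + Re w - b) = two_powers x (a + Re w - p) (a + Re w - q) t"
    using t by (simp add: two_powers_def b_def indicator_def)
  finally show ?thesis .
qed

lemma norm_mult_prod_le_distrib_powr:
  fixes z :: complex and u :: "'i \<Rightarrow> complex" and y :: "'i \<Rightarrow> real"
  assumes "finite I" "\<forall>i\<in>I. 0 < y i" "0 < x" "0 \<le> C"
    and "norm z \<le> C * (x * (\<Prod>i\<in>I. y i)) powr a"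
    and "\<And>i. i \<in> I \<Longrightarrow> y i powr a * norm (u i) \<le> G i"
  shows "norm (z * (\<Prod>i\<in>I. u i)) \<le> C * x powr a * (\<Prod>i\<in>I. G i)"
proof -
  have "(x * (\<Prod>i\<in>I. y i)) powr a = x powr a * (\<Prod>i\<in>I. y i powr a)"
    using assms(1-3) by (simp add: powr_mult prod_powr_distrib less_imp_le prod_nonneg)
  then have "norm z \<le> C * x powr a * (\<Prod>i\<in>I. y i powr a)"
    using assms(5) by (simp add: mult.assoc)
  then have "norm (z * (\<Prod>i\<in>I. u i))
      \<le> C * x powr a * (\<Prod>i\<in>I. y i powr a) * (\<Prod>i\<in>I. norm (u i))"
    unfolding norm_mult prod_norm by (rule mult_right_mono) (simp add: prod_nonneg)
  also have "\<dots> = C * x powr a * (\<Prod>i\<in>I. y i powr a * norm (u i))"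
    by (simp add: prod.distrib mult.assoc)
  also have "\<dots> \<le> C * x powr a * (\<Prod>i\<in>I. G i)"
    using assms(4,6) by (intro mult_left_mono prod_mono) auto
  finally show ?thesis .
qed

lemma set_integrable_positive_orthant_dominated:
  fixes n :: nat and F :: "(nat \<Rightarrow> real) \<Rightarrow> complex"
    and G :: "nat \<Rightarrow> real \<Rightarrow> real" and K :: real
  defines "M \<equiv> PiM {..<n} (\<lambda>_. lborel)"
  assumes "F \<in> borel_measurable M"
    and "\<And>i. i < n \<Longrightarrow> integrable lborel (G i)"
    and "\<And>y. \<forall>i<n. 0 < y i \<Longrightarrow> norm (F y) \<le> K * (\<Prod>i<n. G i (y i))"
  shows "set_integrable M {y \<in> space M. \<forall>i<n. 0 < y i} F"
proof -
  interpret product_sigma_finite "\<lambda>_. lborel :: real measure" ..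
  have int: "integrable M (\<lambda>y. K * (\<Prod>i<n. G i (y i)))"
    unfolding M_def using assms(3) by (intro integrable_mult_right product_integrable_prod) auto
  have "{y \<in> space M. \<forall>i<n. 0 < y i} \<in> sets M"
    unfolding M_def by measurable
  then have meas:
      "(\<lambda>y. indicator {y \<in> space M. \<forall>i<n. 0 < y i} y *\<^sub>R F y) \<in> borel_measurable M"
    using assms(2) by measurable
  have bound: "norm (indicator {y \<in> space M. \<forall>i<n. 0 < y i} y *\<^sub>R F y)
      \<le> norm (K * (\<Prod>i<n. G i (y i)))" for y
    using assms(4)[of y] by (auto simp: indicator_def)
  show ?thesis
    unfolding set_integrable_def
    by (rule Bochner_Integration.integrable_bound[OF int meas AE_I2[OF bound]])
qed

theorem proposition6p4:
  fixes d :: nat and \<nu> :: "nat \<Rightarrow> complex" and m :: "nat \<Rightarrow> int" and x :: real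
  assumes "d \<ge> 1"
    and "\<exists>a::real. -1/2 \<le> a \<and> a \<le> real_of_int \<bar>m d\<bar> \<and>
           (\<forall>l<d. (1/2) * (-1/2 - a) < Re (\<nu> l) \<and> Re (\<nu> l) < (1/2) * (real_of_int \<bar>m l\<bar> - a))"
    and "x > 0"
  shows "set_integrable (PiM {..<d} (\<lambda>_. lborel))
           {y \<in> space (PiM {..<d} (\<lambda>_. lborel)). \<forall>l<d. y l > 0}
           (\<lambda>y. 2 ^ d * j0 (m d) (x * (\<Prod>l<d. y l)) *
                 (\<Prod>l<d. complex_of_real (y l) powr (2 * \<nu> l - 1) * j0 (m l) (x / y l)))"
proof -
  obtain a where a: "-1/2 \<le> a" "a \<le> real_of_int \<bar>m d\<bar>"
    and \<nu>: "\<And>l. l < d \<Longrightarrow>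
      (1/2) * (-1/2 - a) < Re (\<nu> l) \<and> Re (\<nu> l) < (1/2) * (real_of_int \<bar>m l\<bar> - a)"
    using assms(2) by blast
  obtain C where C: "\<And>l. 0 \<le> C l"
    "\<And>l t b. 0 < t \<Longrightarrow> -1/2 \<le> b \<Longrightarrow> b \<le> of_int \<bar>m l\<bar> \<Longrightarrow> norm (j0 (m l) t) \<le> C l * t powr b"
    using norm_j0_powr_bound[of "m _"] by metis
  define G where "G l t = C l * (x powr (-1/2) + x powr of_int \<bar>m l\<bar>)
    * two_powers x (a + Re (2 * \<nu> l - 1) - (-1/2)) (a + Re (2 * \<nu> l - 1) - of_int \<bar>m l\<bar>) t"
    for l t
  show ?thesis
  proof (rule set_integrable_positive_orthant_dominated)
    show "integrable lborel (G l)" if "l < d" for l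
      unfolding G_def[abs_def] using \<nu>[OF that] \<open>x > 0\<close>
      by (intro integrable_mult_right integrable_two_powers) auto
    fix y :: "nat \<Rightarrow> real" assume y: "\<forall>l<d. 0 < y l"
    then have "0 < x * (\<Prod>l<d. y l)"
      using \<open>x > 0\<close> by (intro mult_pos_pos prod_pos) auto
    then have "norm (2 ^ d * j0 (m d) (x * (\<Prod>l<d. y l)))
        \<le> 2 ^ d * C d * (x * (\<Prod>l<d. y l)) powr a"
      using C(2)[of "x * (\<Prod>l<d. y l)" a d] a by (simp add: norm_mult norm_power mult.assoc)
    moreover have "y l powr a * norm (of_real (y l) powr (2 * \<nu> l - 1) * j0 (m l) (x / y l))
        \<le> G l (y l)" if "l \<in> {..<d}" for l
      unfolding G_def using y that \<open>x > 0\<close> C by (intro norm_powr_mult_at_inverse_le) auto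
    ultimately show "norm (2 ^ d * j0 (m d) (x * (\<Prod>l<d. y l)) *
        (\<Prod>l<d. of_real (y l) powr (2 * \<nu> l - 1) * j0 (m l) (x / y l)))
      \<le> 2 ^ d * C d * x powr a * (\<Prod>l<d. G l (y l))"
      using y \<open>x > 0\<close> C by (intro norm_mult_prod_le_distrib_powr) auto
  qed measurable
qed

end
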